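(* Let $d \ge 3$ and $s\ge 2$, $t$ be integers with either ($s = 2$ and $t \geq 6$) or ($s \geq 3$ and $t \geq 7$). Then every subgraph of $W_d(s)$ isomorphic to $F_t$ contains exactly one hub vertex of $W_d(s)$.
   Context: For $d \ge 3$ and $s \ge 1$, the $s$-hubbed wheel $W_d(s) = \overline{K_s} + C_d$ has vertex set $\{u_1,\dots,u_s\} \cup \{v_1,\dots,v_d\}$ (hub vertices $u_a$ and boundary vertices $v_i$), where $v_1v_2\cdots v_dv_1$ is a cycle, the hub vertices are pairwise non-adjacent, and every $u_a$ is adjacent to every $v_i$. The fan $F_t$ ($t\ge 3$) is the graph obtained from a cycle $v_1v_2\cdots v_tv_1$ by adding all chords $v_1v_i$, $3 \le i \le t-1$. *)

theory Defs
  imports Main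
begin

text \<open>Hubbed wheel W_d(s): hub vertices Inl a (a < s), boundary vertices Inr i (i < d),
  boundary cycle Inr 0, Inr 1, ..., Inr (d-1), Inr 0 (0-indexed).\<close>
definition wheel_verts :: "nat \<Rightarrow> nat \<Rightarrow> (nat + nat) set" where
  "wheel_verts d s = Inl ` {..<s} \<union> Inr ` {..<d}"

fun wheel_adj :: "nat \<Rightarrow> nat \<Rightarrow> (nat + nat) \<Rightarrow> (nat + nat) \<Rightarrow> bool" where
  "wheel_adj d s (Inl a) (Inl b) = False"
| "wheel_adj d s (Inl a) (Inr i) = (a < s \<and> i < d)"
| "wheel_adj d s (Inr i) (Inl a) = (a < s \<and> i < d)"
| "wheel_adj d s (Inr i) (Inr j) = (i < d \<and> j < d \<and> (j = (i + 1) mod d \<or> i = (j + 1) mod d))"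

text \<open>Fan F_t on vertices 0..t-1 (0-indexed: vertex k is v_(k+1) of the paper):
  cycle edges {k, k+1} and {t-1, 0}, plus chords from 0 to every vertex.\<close>
definition fan_verts :: "nat \<Rightarrow> nat set" where
  "fan_verts t = {..<t}"

definition fan_adj :: "nat \<Rightarrow> nat \<Rightarrow> nat \<Rightarrow> bool" where
  "fan_adj t i j = (i < t \<and> j < t \<and> i \<noteq> j \<and> (i = 0 \<or> j = 0 \<or> j = i + 1 \<or> i = j + 1))"

definition subgraph_embedding ::
  "'a set \<Rightarrow> ('a \<Rightarrow> 'a \<Rightarrow> bool) \<Rightarrow> 'b set \<Rightarrow> ('b \<Rightarrow> 'b \<Rightarrow> bool) \<Rightarrow> ('a \<Rightarrow> 'b) \<Rightarrow> bool" where
  "subgraph_embedding V E V' E' f \<longleftrightarrow>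
     inj_on f V \<and> f ` V \<subseteq> V' \<and> (\<forall>x\<in>V. \<forall>y\<in>V. E x y \<longrightarrow> E' (f x) (f y))"

end

theory Submission
  imports Defs
begin

text \<open>The fan centre 0 is adjacent to every other fan vertex. If it were sent to a boundary
  vertex, the rim vertices 1, ..., t-1 would be sent injectively into the hubs and the two boundary
  neighbours of that vertex, so t \<le> s + 3. Moreover, as no two hubs are adjacent, each of the rim
  edges {1,2}, {3,4}, {5,6} would need an endpoint among those two boundary vertices, so t \<le> 6.
  Hence the centre is a hub, and every other fan vertex, being adjacent to it, is a boundary
  vertex.\<close>

lemma wheel_adj_Inr_neighbours:
  assumes "wheel_adj d s (Inr v) w"
  shows "w \<in> Inl ` {..<s} \<union> {Inr ((v + 1) mod d), Inr ((v + d - 1) mod d)}"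
proof (cases w)
  case (Inl a)
  then show ?thesis using assms by auto
next
  case (Inr j)
  then have "j < d" and "j = (v + 1) mod d \<or> v = (j + 1) mod d"
    using assms by auto
  moreover have "j = (v + d - 1) mod d" if "j < d" "v = (j + 1) mod d"
  proof (cases "j + 1 < d")
    case False
    then have "j + 1 = d" using that(1) by simp
    then show ?thesis using that(2) by simp
  qed (use that in simp)
  ultimately show ?thesis using Inr by auto
qed

lemma fan_embedding_inj_on:
  assumes "subgraph_embedding (fan_verts t) (fan_adj t) V E f" and "A \<subseteq> {..<t}"
  shows "inj_on f A"
  using assms unfolding subgraph_embedding_def fan_verts_def by (blast intro: inj_on_subset)

lemma fan_embedding_centre_adj:
  assumes "subgraph_embedding (fan_verts t) (fan_adj t) V E f" and "0 < i" and "i < t"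
  shows "E (f 0) (f i)"
  using assms unfolding subgraph_embedding_def fan_verts_def fan_adj_def by auto

lemma fan_embedding_rim_adj:
  assumes "subgraph_embedding (fan_verts t) (fan_adj t) V E f" and "i + 1 < t"
  shows "E (f i) (f (i + 1))"
  using assms unfolding subgraph_embedding_def fan_verts_def fan_adj_def by auto

lemma fan_embedding_Inr_centre_rim:
  assumes "subgraph_embedding (fan_verts t) (fan_adj t) (wheel_verts d s) (wheel_adj d s) f"
    and "f 0 = Inr v" and "0 < i" and "i < t"
  shows "f i \<in> Inl ` {..<s} \<union> {Inr ((v + 1) mod d), Inr ((v + d - 1) mod d)}"
  using wheel_adj_Inr_neighbours fan_embedding_centre_adj[OF assms(1,3,4)] assms(2) by metis

lemma fan_embedding_Inr_centre_le_hubs: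
  assumes emb: "subgraph_embedding (fan_verts t) (fan_adj t) (wheel_verts d s) (wheel_adj d s) f"
    and centre: "f 0 = Inr v"
  shows "t \<le> s + 3"
proof -
  let ?N = "Inl ` {..<s} \<union> {Inr ((v + 1) mod d), Inr ((v + d - 1) mod d)}"
  have "inj_on f {1..<t}"
    by (intro fan_embedding_inj_on[OF emb]) auto
  moreover have "f ` {1..<t} \<subseteq> ?N"
    using fan_embedding_Inr_centre_rim[OF emb centre] by (simp add: image_subset_iff)
  ultimately have "card {1..<t} \<le> card ?N"
    by (intro card_inj_on_le) auto
  also have "card ?N \<le> s + 2"
    using card_Un_le[of "Inl ` {..<s}"] by (simp add: card_image card_insert_le_m1)
  finally show ?thesis by simp
qed

lemma fan_embedding_Inr_centre_le_6:
  assumes emb: "subgraph_embedding (fan_verts t) (fan_adj t) (wheel_verts d s) (wheel_adj d s) f"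
    and centre: "f 0 = Inr v"
  shows "t \<le> 6"
proof (rule ccontr)
  assume "\<not> t \<le> 6"
  let ?B = "{Inr ((v + 1) mod d), Inr ((v + d - 1) mod d)} :: (nat + nat) set"
  have boundary: "\<exists>j. i \<le> j \<and> j \<le> i + 1 \<and> f j \<in> ?B" if "0 < i" "i + 1 < t" for i
  proof -
    have "f i \<in> Inl ` {..<s} \<union> ?B" and "f (i + 1) \<in> Inl ` {..<s} \<union> ?B"
      using fan_embedding_Inr_centre_rim[OF emb centre] that by simp_all
    moreover have "f i \<notin> range Inl \<or> f (i + 1) \<notin> range Inl"
      using fan_embedding_rim_adj[OF emb \<open>i + 1 < t\<close>] by auto
    ultimately have "f i \<in> ?B \<or> f (i + 1) \<in> ?B" by blast
    then show ?thesis by (meson le_add1 order_refl)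
  qed
  obtain i\<^sub>1 where "1 \<le> i\<^sub>1" "i\<^sub>1 \<le> 2" "f i\<^sub>1 \<in> ?B"
    using boundary[of 1] \<open>\<not> t \<le> 6\<close> by auto
  obtain i\<^sub>2 where "3 \<le> i\<^sub>2" "i\<^sub>2 \<le> 4" "f i\<^sub>2 \<in> ?B"
    using boundary[of 3] \<open>\<not> t \<le> 6\<close> by auto
  obtain i\<^sub>3 where "5 \<le> i\<^sub>3" "i\<^sub>3 \<le> 6" "f i\<^sub>3 \<in> ?B"
    using boundary[of 5] \<open>\<not> t \<le> 6\<close> by auto
  have "inj_on f {i\<^sub>1, i\<^sub>2, i\<^sub>3}"
    using \<open>i\<^sub>1 \<le> 2\<close> \<open>i\<^sub>2 \<le> 4\<close> \<open>i\<^sub>3 \<le> 6\<close> \<open>\<not> t \<le> 6\<close>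
    by (intro fan_embedding_inj_on[OF emb]) auto
  moreover have "f ` {i\<^sub>1, i\<^sub>2, i\<^sub>3} \<subseteq> ?B"
    using \<open>f i\<^sub>1 \<in> ?B\<close> \<open>f i\<^sub>2 \<in> ?B\<close> \<open>f i\<^sub>3 \<in> ?B\<close> by simp
  ultimately have "card {i\<^sub>1, i\<^sub>2, i\<^sub>3} \<le> card ?B"
    by (simp add: card_inj_on_le)
  moreover have "card {i\<^sub>1, i\<^sub>2, i\<^sub>3} = 3"
    using \<open>i\<^sub>1 \<le> 2\<close> \<open>3 \<le> i\<^sub>2\<close> \<open>i\<^sub>2 \<le> 4\<close> \<open>5 \<le> i\<^sub>3\<close> by simp
  moreover have "card ?B \<le> 2"
    by (simp add: card_insert_le_m1)
  ultimately show False by linarith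
qed

lemma fan_embedding_Inl_centre_hubs:
  assumes emb: "subgraph_embedding (fan_verts t) (fan_adj t) (wheel_verts d s) (wheel_adj d s) f"
    and centre: "f 0 = Inl a" and "0 < t"
  shows "{b. b < s \<and> Inl b \<in> f ` fan_verts t} = {a}"
proof (intro set_eqI iffI)
  fix b
  assume "b \<in> {b. b < s \<and> Inl b \<in> f ` fan_verts t}"
  then obtain i where "i < t" and "f i = Inl b"
    unfolding fan_verts_def by auto
  moreover have "i = 0"
  proof (rule ccontr)
    assume "i \<noteq> 0"
    then have "wheel_adj d s (Inl a) (f i)"
      using fan_embedding_centre_adj[OF emb _ \<open>i < t\<close>] centre by simp
    with \<open>f i = Inl b\<close> show False by simp
  qed
  ultimately show "b \<in> {a}" using centre by simp
next
  fix b
  assume "b \<in> {a}"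
  moreover have "f 0 \<in> wheel_verts d s"
    using emb \<open>0 < t\<close> unfolding subgraph_embedding_def fan_verts_def by auto
  ultimately show "b \<in> {b. b < s \<and> Inl b \<in> f ` fan_verts t}"
    using centre \<open>0 < t\<close> unfolding wheel_verts_def fan_verts_def by force
qed

theorem lemma2p4:
  fixes d s t :: nat and f :: "nat \<Rightarrow> nat + nat"
  assumes "d \<ge> 3" and "s \<ge> 2"
    and "(s = 2 \<and> t \<ge> 6) \<or> (s \<ge> 3 \<and> t \<ge> 7)"
    and "subgraph_embedding (fan_verts t) (fan_adj t) (wheel_verts d s) (wheel_adj d s) f"
  shows "card {a. a < s \<and> Inl a \<in> f ` fan_verts t} = 1"
proof -
  obtain a where "f 0 = Inl a"
  proof (cases "f 0")
    case (Inr v)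
    then have "t \<le> s + 3" and "t \<le> 6"
      using fan_embedding_Inr_centre_le_hubs fan_embedding_Inr_centre_le_6 assms(4)
      by blast+
    with assms(3) show ?thesis by linarith
  qed
  moreover have "0 < t" using assms(3) by linarith
  ultimately show ?thesis using fan_embedding_Inl_centre_hubs assms(4) by simp
qed

end
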